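(* For any connected graph $G$ with vertex set $\{u_1,\dots,u_n\}$, $n\ge2$, and any family $\mathcal{H}=\{H_1,\dots,H_n\}$ of graphs, $\dim_l(G\circ\mathcal{H})\ge\dim_l(G)$. Moreover, if every $H_i$ is an edgeless graph, then $\dim_l(G\circ\mathcal{H})=\dim_l(G)$.
   Context: All graphs are finite and simple with at least one vertex. For a connected graph $G$, $\dim_l(G)$ is the minimum size of $S\subseteq V(G)$ such that for every two adjacent vertices $x,y$ there is $s\in S$ with $d_G(s,x)\ne d_G(s,y)$ ($d_G$ the shortest-path distance). Lexicographic product $G\circ\mathcal{H}$: vertex set $\bigcup_i\{u_i\}\times V(H_i)$, $(u_i,v)\sim(u_j,w)$ iff $u_iu_j\in E(G)$, or $i=j$ and $vw\in E(H_i)$. *)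

theory Defs
  imports Main
begin

type_synonym 'a graph = "'a set \<times> ('a \<times> 'a) set"

definition verts :: "'a graph \<Rightarrow> 'a set" where "verts G = fst G"
definition edges :: "'a graph \<Rightarrow> ('a \<times> 'a) set" where "edges G = snd G"

definition simple_graph :: "'a graph \<Rightarrow> bool" where
  "simple_graph G \<longleftrightarrow> finite (verts G) \<and> verts G \<noteq> {} \<and>
     edges G \<subseteq> verts G \<times> verts G \<and> sym (edges G) \<and> irrefl (edges G)"

definition gdist :: "'a graph \<Rightarrow> 'a \<Rightarrow> 'a \<Rightarrow> nat" where
  "gdist G x y = (LEAST k. (x, y) \<in> edges G ^^ k)"

definition connected_graph :: "'a graph \<Rightarrow> bool" where
  "connected_graph G \<longleftrightarrow> simple_graph G \<and>
     (\<forall>x\<in>verts G. \<forall>y\<in>verts G. \<exists>k. (x, y) \<in> edges G ^^ k)"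

definition local_resolving :: "'a graph \<Rightarrow> 'a set \<Rightarrow> bool" where
  "local_resolving G S \<longleftrightarrow> S \<subseteq> verts G \<and>
     (\<forall>x y. (x, y) \<in> edges G \<longrightarrow> (\<exists>s\<in>S. gdist G s x \<noteq> gdist G s y))"

definition local_metric_dim :: "'a graph \<Rightarrow> nat" where
  "local_metric_dim G = (LEAST k. \<exists>S. local_resolving G S \<and> card S = k)"

definition lex_product :: "'a graph \<Rightarrow> ('a \<Rightarrow> 'b graph) \<Rightarrow> ('a \<times> 'b) graph" where
  "lex_product G H =
    (let V = Sigma (verts G) (\<lambda>u. verts (H u)) in
     (V, {((u, v), (u', w)). (u, v) \<in> V \<and> (u', w) \<in> V \<and>
            ((u, u') \<in> edges G \<or> (u = u' \<and> (v, w) \<in> edges (H u)))}))"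

end

theory Submission
  imports Defs
begin

text \<open>Distances in the lexicographic product between vertices of different fibres are the
  distances in \<open>G\<close>. Hence a local resolving set of the product projects to one of \<open>G\<close>: a
  resolving vertex lying in the fibre of an endpoint of an edge of \<open>G\<close> is replaced by that
  endpoint, which resolves the edge itself. Conversely, if all fibres are edgeless, every edge of
  the product joins two fibres, and a local resolving set of \<open>G\<close> lifts to one vertex per fibre:
  a lifted vertex in the fibre of an endpoint is at distance 1 from the other endpoint, but at
  distance 0 or 2 from every vertex of its own fibre.\<close>

lemma gdist_self: "gdist G x x = 0"
  unfolding gdist_def by (rule Least_eq_0) simp

lemma gdist_path: "(x, y) \<in> edges G ^^ k \<Longrightarrow> (x, y) \<in> edges G ^^ gdist G x y"
  unfolding gdist_def by (rule LeastI)

lemma gdist_le: "(x, y) \<in> edges G ^^ k \<Longrightarrow> gdist G x y \<le> k"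
  unfolding gdist_def by (rule Least_le)

text \<open>The reachability hypothesis matters: for unreachable pairs \<open>gdist\<close> is an unspecified
  \<open>LEAST\<close> of the empty set.\<close>
lemma gdist_eq_1_iff:
  assumes "(x, y) \<in> edges G ^^ k"
  shows "gdist G x y = 1 \<longleftrightarrow> x \<noteq> y \<and> (x, y) \<in> edges G"
proof
  assume "gdist G x y = 1"
  then show "x \<noteq> y \<and> (x, y) \<in> edges G"
    using gdist_path[OF assms] by (auto simp: gdist_self)
next
  assume e: "x \<noteq> y \<and> (x, y) \<in> edges G"
  then have "gdist G x y \<le> 1" by (intro gdist_le[where k = 1]) simp
  moreover have "gdist G x y \<noteq> 0" using gdist_path[OF assms] e by (metis relpow_0_E)
  ultimately show "gdist G x y = 1" by simp
qed

lemma gdist_edge: "(x, y) \<in> edges G \<Longrightarrow> x \<noteq> y \<Longrightarrow> gdist G x y = 1"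
  using gdist_eq_1_iff[of x y 1 G] by simp

lemma local_resolving_verts:
  assumes "simple_graph G"
  shows "local_resolving G (verts G)"
  unfolding local_resolving_def
proof (intro conjI allI impI)
  fix x y assume e: "(x, y) \<in> edges G"
  then have "x \<noteq> y" "x \<in> verts G"
    using assms by (auto simp: simple_graph_def irrefl_def)
  then show "\<exists>s\<in>verts G. gdist G s x \<noteq> gdist G s y"
    using e by (intro bexI[of _ x]) (simp_all add: gdist_self gdist_edge)
qed simp

lemma local_metric_dim_le_card: "local_resolving G S \<Longrightarrow> local_metric_dim G \<le> card S"
  unfolding local_metric_dim_def by (rule Least_le) blast

lemma ex_local_metric_basis:
  assumes "local_resolving G S"
  shows "\<exists>B. local_resolving G B \<and> card B = local_metric_dim G"
  using LeastI_ex[of "\<lambda>k. \<exists>S. local_resolving G S \<and> card S = k"] assms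
  unfolding local_metric_dim_def by blast

lemma verts_lex_product: "verts (lex_product G H) = Sigma (verts G) (\<lambda>u. verts (H u))"
  by (simp add: lex_product_def verts_def Let_def)

lemma lex_product_edge_iff:
  "((u, v), (u', w)) \<in> edges (lex_product G H) \<longleftrightarrow>
     u \<in> verts G \<and> v \<in> verts (H u) \<and> u' \<in> verts G \<and> w \<in> verts (H u') \<and>
     ((u, u') \<in> edges G \<or> (u = u' \<and> (v, w) \<in> edges (H u)))"
  by (simp add: lex_product_def edges_def verts_def Let_def)

lemma simple_graph_lex_product:
  assumes "simple_graph G" and "\<forall>u\<in>verts G. simple_graph (H u)"
  shows "simple_graph (lex_product G H)"
proof -
  obtain u where "u \<in> verts G" using assms(1) by (auto simp: simple_graph_def)
  moreover obtain v where "v \<in> verts (H u)"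
    using assms(2) \<open>u \<in> verts G\<close> by (auto simp: simple_graph_def)
  ultimately have "verts (lex_product G H) \<noteq> {}" by (auto simp: verts_lex_product)
  moreover have "finite (verts (lex_product G H))"
    using assms by (auto simp: verts_lex_product simple_graph_def)
  moreover have "sym (edges (lex_product G H))" "irrefl (edges (lex_product G H))"
    using assms unfolding simple_graph_def
    by (auto simp: sym_def irrefl_def split_paired_all lex_product_edge_iff)
  ultimately show ?thesis
    by (auto simp: simple_graph_def verts_lex_product lex_product_edge_iff)
qed

lemma relpow_lex_product_fst:
  "((a, b), (u, v)) \<in> edges (lex_product G H) ^^ k \<Longrightarrow> \<exists>j\<le>k. (a, u) \<in> edges G ^^ j"
proof (induction k arbitrary: u v)
  case 0
  then show ?case by auto
next
  case (Suc k)
  then obtain c c' where walk: "((a, b), (c, c')) \<in> edges (lex_product G H) ^^ k"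
    and step: "((c, c'), (u, v)) \<in> edges (lex_product G H)" by auto
  obtain j where j: "j \<le> k" "(a, c) \<in> edges G ^^ j" using Suc.IH[OF walk] by blast
  from step have "(c, u) \<in> edges G \<or> c = u" by (auto simp: lex_product_edge_iff)
  then show ?case
  proof
    assume "(c, u) \<in> edges G"
    then show ?case using j by (intro exI[of _ "Suc j"]) auto
  qed (use j le_SucI in blast)
qed

lemma relpow_lex_product_lift:
  assumes "edges G \<subseteq> verts G \<times> verts G" and "\<forall>c\<in>verts G. verts (H c) \<noteq> {}"
  shows "0 < k \<Longrightarrow> (a, u) \<in> edges G ^^ k \<Longrightarrow> b \<in> verts (H a) \<Longrightarrow> v \<in> verts (H u)
    \<Longrightarrow> ((a, b), (u, v)) \<in> edges (lex_product G H) ^^ k"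
proof (induction k arbitrary: u v)
  case 0
  then show ?case by simp
next
  case (Suc k)
  then obtain c where walk: "(a, c) \<in> edges G ^^ k" and step: "(c, u) \<in> edges G" by auto
  show ?case
  proof (cases "k = 0")
    case True
    with walk step assms(1) Suc.prems show ?thesis by (auto simp: lex_product_edge_iff)
  next
    case False
    obtain c' where c': "c' \<in> verts (H c)" using step assms by blast
    have "((a, b), (c, c')) \<in> edges (lex_product G H) ^^ k"
      using Suc.IH[of c c'] False walk Suc.prems c' by simp
    moreover have "((c, c'), (u, v)) \<in> edges (lex_product G H)"
      using step assms(1) c' Suc.prems by (auto simp: lex_product_edge_iff)
    ultimately show ?thesis by auto
  qed
qed

lemma gdist_lex_product:
  assumes "edges G \<subseteq> verts G \<times> verts G" and "\<forall>c\<in>verts G. verts (H c) \<noteq> {}"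
    and "(a, u) \<in> edges G ^^ k" and "a \<noteq> u"
    and "b \<in> verts (H a)" and "v \<in> verts (H u)"
  shows "gdist (lex_product G H) (a, b) (u, v) = gdist G a u"
proof (rule antisym)
  have "gdist G a u \<noteq> 0" using gdist_path[OF assms(3)] assms(4) by (metis relpow_0_E)
  then have "((a, b), (u, v)) \<in> edges (lex_product G H) ^^ gdist G a u"
    using relpow_lex_product_lift[OF assms(1,2)] gdist_path[OF assms(3)] assms(5,6) by simp
  then show "gdist (lex_product G H) (a, b) (u, v) \<le> gdist G a u"
    by (rule gdist_le)
  then obtain j where "j \<le> gdist (lex_product G H) (a, b) (u, v)" "(a, u) \<in> edges G ^^ j"
    using relpow_lex_product_fst gdist_path \<open>((a, b), (u, v)) \<in> _ ^^ gdist G a u\<close> by metis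
  then show "gdist G a u \<le> gdist (lex_product G H) (a, b) (u, v)"
    using gdist_le by (metis le_trans)
qed

lemma gdist_lex_product_edgeless_fibre_ne_1:
  assumes "sym (edges G)" and "irrefl (edges G)" and "edges (H a) = {}"
    and "((a, b), (u, w)) \<in> edges (lex_product G H)" and "v \<in> verts (H a)"
  shows "gdist (lex_product G H) (a, b) (a, v) \<noteq> 1"
proof -
  have "((u, w), (a, v)) \<in> edges (lex_product G H)"
    using assms by (auto simp: lex_product_edge_iff dest: symD)
  then have "((a, b), (a, v)) \<in> edges (lex_product G H) ^^ 2"
    using assms(4) by (auto simp: numeral_2_eq_2)
  moreover have "((a, b), (a, v)) \<notin> edges (lex_product G H)"
    using assms(2,3) by (auto simp: lex_product_edge_iff irrefl_def)
  ultimately show ?thesis using gdist_eq_1_iff by metis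
qed

lemma local_resolving_fst_image:
  assumes G: "connected_graph G" and nonempty: "\<forall>c\<in>verts G. verts (H c) \<noteq> {}"
    and S: "local_resolving (lex_product G H) S"
  shows "local_resolving G (fst ` S)"
  unfolding local_resolving_def
proof (intro conjI allI impI)
  have "simple_graph G" using G by (simp add: connected_graph_def)
  then have EV: "edges G \<subseteq> verts G \<times> verts G" and "sym (edges G)" "irrefl (edges G)"
    by (simp_all add: simple_graph_def)
  have SV: "S \<subseteq> verts (lex_product G H)" using S by (simp add: local_resolving_def)
  then show "fst ` S \<subseteq> verts G" by (auto simp: verts_lex_product)
  fix u u' assume e: "(u, u') \<in> edges G"
  then have "u \<noteq> u'" "u \<in> verts G" "u' \<in> verts G"
    using EV \<open>irrefl (edges G)\<close> by (auto simp: irrefl_def)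
  then obtain v w where v: "v \<in> verts (H u)" and w: "w \<in> verts (H u')" using nonempty by blast
  have "((u, v), (u', w)) \<in> edges (lex_product G H)"
    using e EV v w by (auto simp: lex_product_edge_iff)
  then obtain a b where ab: "(a, b) \<in> S"
    and resolves: "gdist (lex_product G H) (a, b) (u, v) \<noteq> gdist (lex_product G H) (a, b) (u', w)"
    using S unfolding local_resolving_def by fast
  have a: "a \<in> fst ` S" using ab by force
  have b: "b \<in> verts (H a)" and "a \<in> verts G" using ab SV by (auto simp: verts_lex_product)
  have "gdist G a u \<noteq> gdist G a u'"
  proof (cases "a = u \<or> a = u'")
    case True
    then show ?thesis
      using e \<open>u \<noteq> u'\<close> \<open>sym (edges G)\<close> by (auto simp: gdist_self gdist_edge dest: symD)
  next
    case False
    obtain k k' where "(a, u) \<in> edges G ^^ k" "(a, u') \<in> edges G ^^ k'"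
      using G \<open>a \<in> verts G\<close> \<open>u \<in> verts G\<close> \<open>u' \<in> verts G\<close>
      unfolding connected_graph_def by meson
    then show ?thesis
      using False resolves gdist_lex_product[OF EV nonempty _ _ b] v w by metis
  qed
  then show "\<exists>t\<in>fst ` S. gdist G t u \<noteq> gdist G t u'" using a by blast
qed

lemma local_resolving_lex_product_section:
  assumes G: "connected_graph G" and nonempty: "\<forall>c\<in>verts G. verts (H c) \<noteq> {}"
    and edgeless: "\<forall>c\<in>verts G. edges (H c) = {}"
    and S: "local_resolving G S" and f: "\<forall>a\<in>S. f a \<in> verts (H a)"
  shows "local_resolving (lex_product G H) ((\<lambda>a. (a, f a)) ` S)"
  unfolding local_resolving_def
proof (intro conjI allI impI)
  have "simple_graph G" using G by (simp add: connected_graph_def)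
  then have EV: "edges G \<subseteq> verts G \<times> verts G" and sym: "sym (edges G)"
    and irrefl: "irrefl (edges G)"
    by (simp_all add: simple_graph_def)
  have SV: "S \<subseteq> verts G" using S by (simp add: local_resolving_def)
  then show "(\<lambda>a. (a, f a)) ` S \<subseteq> verts (lex_product G H)"
    using f by (auto simp: verts_lex_product)
  fix x y assume "(x, y) \<in> edges (lex_product G H)"
  moreover obtain u v u' w where xy: "x = (u, v)" "y = (u', w)" by (cases x, cases y)
  ultimately have e: "((u, v), (u', w)) \<in> edges (lex_product G H)" by simp
  then have eu: "(u, u') \<in> edges G" and v: "v \<in> verts (H u)" and w: "w \<in> verts (H u')"
    using edgeless by (auto simp: lex_product_edge_iff)
  have "u \<noteq> u'" "u \<in> verts G" "u' \<in> verts G"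
    using eu EV irrefl by (auto simp: irrefl_def)
  have eu': "(u', u) \<in> edges G" using sym eu by (rule symD)
  obtain a where "a \<in> S" and resolves: "gdist G a u \<noteq> gdist G a u'"
    using S eu unfolding local_resolving_def by blast
  then have fa: "f a \<in> verts (H a)" and "a \<in> verts G" using f SV by auto
  have "gdist (lex_product G H) (a, f a) x \<noteq> gdist (lex_product G H) (a, f a) y"
  proof -
    consider "a = u" | "a = u'" | "a \<noteq> u" "a \<noteq> u'" by blast
    then show ?thesis
    proof cases
      case 1
      then have "((a, f a), (u', w)) \<in> edges (lex_product G H)"
        using eu fa w \<open>u' \<in> verts G\<close> \<open>a \<in> verts G\<close> by (simp add: lex_product_edge_iff)
      then show ?thesis
        using gdist_edge gdist_lex_product_edgeless_fibre_ne_1[OF sym irrefl] edgeless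
          \<open>a \<in> verts G\<close> \<open>u \<noteq> u'\<close> 1 v unfolding xy by (metis prod.inject)
    next
      case 2
      then have "((a, f a), (u, v)) \<in> edges (lex_product G H)"
        using eu' fa v \<open>u \<in> verts G\<close> \<open>a \<in> verts G\<close> by (simp add: lex_product_edge_iff)
      then show ?thesis
        using gdist_edge gdist_lex_product_edgeless_fibre_ne_1[OF sym irrefl] edgeless
          \<open>a \<in> verts G\<close> \<open>u \<noteq> u'\<close> 2 w unfolding xy by (metis prod.inject)
    next
      case 3
      obtain k k' where "(a, u) \<in> edges G ^^ k" "(a, u') \<in> edges G ^^ k'"
        using G \<open>a \<in> verts G\<close> \<open>u \<in> verts G\<close> \<open>u' \<in> verts G\<close>
        unfolding connected_graph_def by meson
      then show ?thesis
        using 3 resolves gdist_lex_product[OF EV nonempty _ _ fa] v w unfolding xy by metis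
    qed
  qed
  then show "\<exists>s\<in>(\<lambda>a. (a, f a)) ` S.
      gdist (lex_product G H) s x \<noteq> gdist (lex_product G H) s y"
    using \<open>a \<in> S\<close> by blast
qed

theorem mainTheorem7:
  fixes G :: "'a graph" and H :: "'a \<Rightarrow> 'b graph"
  assumes "connected_graph G"
    and "card (verts G) \<ge> 2"
    and "\<forall>u\<in>verts G. simple_graph (H u)"
  shows "local_metric_dim (lex_product G H) \<ge> local_metric_dim G
     \<and> ((\<forall>u\<in>verts G. edges (H u) = {}) \<longrightarrow>
          local_metric_dim (lex_product G H) = local_metric_dim G)"
proof -
  have G: "simple_graph G" using assms(1) by (simp add: connected_graph_def)
  have L: "simple_graph (lex_product G H)" using simple_graph_lex_product[OF G assms(3)] .
  have nonempty: "\<forall>c\<in>verts G. verts (H c) \<noteq> {}" using assms(3) by (simp add: simple_graph_def)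
  obtain B where B: "local_resolving (lex_product G H) B"
    and card_B: "card B = local_metric_dim (lex_product G H)"
    using ex_local_metric_basis[OF local_resolving_verts[OF L]] by blast
  have "local_metric_dim G \<le> card (fst ` B)"
    using local_resolving_fst_image[OF assms(1) nonempty B] by (rule local_metric_dim_le_card)
  also have "\<dots> \<le> card B"
    using B L by (intro card_image_le) (auto simp: local_resolving_def simple_graph_def
        intro: finite_subset)
  finally have "local_metric_dim G \<le> local_metric_dim (lex_product G H)" using card_B by simp
  moreover have "local_metric_dim (lex_product G H) \<le> local_metric_dim G"
    if edgeless: "\<forall>u\<in>verts G. edges (H u) = {}"
  proof -
    obtain S where S: "local_resolving G S" and card_S: "card S = local_metric_dim G"
      using ex_local_metric_basis[OF local_resolving_verts[OF G]] by blast
    define f where "f a = (SOME b. b \<in> verts (H a))" for a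
    have "\<forall>a\<in>S. f a \<in> verts (H a)"
      using S nonempty by (auto simp: local_resolving_def f_def some_in_eq)
    then have "local_metric_dim (lex_product G H) \<le> card ((\<lambda>a. (a, f a)) ` S)"
      by (intro local_metric_dim_le_card local_resolving_lex_product_section
          [OF assms(1) nonempty edgeless S])
    also have "\<dots> \<le> card S"
      using S G by (intro card_image_le) (auto simp: local_resolving_def simple_graph_def
          intro: finite_subset)
    finally show ?thesis using card_S by simp
  qed
  ultimately show ?thesis by auto
qed

end
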